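(* Let $T$ be a tree with colour classes $F_1$ and $F_2$. Let $R\subseteq F_1$ with $|R|\le 2$ such that, if $|R|=2$, the two vertices of $R$ have no common neighbour in $T$. Let $\varepsilon>0$ and $\alpha>2\varepsilon$. Let $G$ be a graph and let $(X,Y)$ be an $\varepsilon$-regular pair in $G$ with density $d(X,Y)>3\alpha$, such that $|F_1|\le\varepsilon|X|$ and $|F_2|\le \varepsilon|Y|$. Let $X'\subseteq X$ and $Y'\subseteq Y$ satisfy $|X'|>2\frac{\varepsilon}{\alpha}|X|$ and $|Y'|>2\frac{\varepsilon}{\alpha}|Y|$. Let $\varphi$ be any injective map from $R$ into the set of vertices of $X'$ having more than $3\varepsilon|Y|$ neighbours in $Y'$. Then $\varphi$ can be extended to an injective map $\varphi:V(T)\to X\cup Y$ which maps every edge of $T$ to an edge of $G$ and satisfies $\varphi(F_1)\subseteq X'$ and $\varphi(F_2)\subseteq Y'$.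
   Context: For disjoint vertex sets $X,Y$ of a graph $G$, $E(X,Y)$ is the set of edges with one end in $X$ and the other in $Y$, and the density is $d(X,Y)=\frac{|E(X,Y)|}{|X||Y|}$. The pair $(X,Y)$ is $\varepsilon$-regular if for all $X'\subseteq X$, $Y'\subseteq Y$ with $|X'|\ge\varepsilon|X|$ and $|Y'|\ge \varepsilon|Y|$ we have $|d(X',Y')-d(X,Y)|\le\varepsilon$. *)

theory Defs
  imports Complex_Main
begin

definition graph :: "'a set \<Rightarrow> 'a set set \<Rightarrow> bool" where
  "graph V E \<longleftrightarrow> finite V \<and> (\<forall>e\<in>E. e \<subseteq> V \<and> card e = 2)"

definition adj :: "'a set set \<Rightarrow> 'a \<Rightarrow> 'a \<Rightarrow> bool" where
  "adj E u v \<longleftrightarrow> {u, v} \<in> E"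

definition connected_graph :: "'a set \<Rightarrow> 'a set set \<Rightarrow> bool" where
  "connected_graph V E \<longleftrightarrow> V \<noteq> {} \<and>
     (\<forall>u\<in>V. \<forall>v\<in>V. (u, v) \<in> {(x, y). adj E x y}\<^sup>*)"

definition is_cycle :: "'a set set \<Rightarrow> 'a list \<Rightarrow> bool" where
  "is_cycle E vs \<longleftrightarrow> length vs \<ge> 3 \<and> distinct vs \<and>
     (\<forall>i. Suc i < length vs \<longrightarrow> adj E (vs ! i) (vs ! Suc i)) \<and>
     adj E (last vs) (hd vs)"

definition acyclic_graph :: "'a set set \<Rightarrow> bool" where
  "acyclic_graph E \<longleftrightarrow> \<not> (\<exists>vs. is_cycle E vs)"

definition tree :: "'a set \<Rightarrow> 'a set set \<Rightarrow> bool" where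
  "tree V E \<longleftrightarrow> graph V E \<and> connected_graph V E \<and> acyclic_graph E"

definition colour_classes :: "'a set \<Rightarrow> 'a set set \<Rightarrow> 'a set \<Rightarrow> 'a set \<Rightarrow> bool" where
  "colour_classes V E F1 F2 \<longleftrightarrow> F1 \<union> F2 = V \<and> F1 \<inter> F2 = {} \<and>
     (\<forall>e\<in>E. card (e \<inter> F1) = 1 \<and> card (e \<inter> F2) = 1)"

definition cross_edges :: "'a set set \<Rightarrow> 'a set \<Rightarrow> 'a set \<Rightarrow> 'a set set" where
  "cross_edges E X Y = {e\<in>E. \<exists>x\<in>X. \<exists>y\<in>Y. e = {x, y}}"

definition density :: "'a set set \<Rightarrow> 'a set \<Rightarrow> 'a set \<Rightarrow> real" where
  "density E X Y = real (card (cross_edges E X Y)) / (real (card X) * real (card Y))"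

definition eps_regular :: "'a set set \<Rightarrow> real \<Rightarrow> 'a set \<Rightarrow> 'a set \<Rightarrow> bool" where
  "eps_regular E \<epsilon> X Y \<longleftrightarrow>
     (\<forall>X' Y'. X' \<subseteq> X \<and> Y' \<subseteq> Y \<and> real (card X') \<ge> \<epsilon> * real (card X)
        \<and> real (card Y') \<ge> \<epsilon> * real (card Y)
        \<longrightarrow> \<bar>density E X' Y' - density E X Y\<bar> \<le> \<epsilon>)"

definition neighbours_in :: "'a set set \<Rightarrow> 'a \<Rightarrow> 'a set \<Rightarrow> 'a set" where
  "neighbours_in E v S = {u\<in>S. adj E v u}"

end

theory Submission
  imports Defs
begin

text \<open>
  The embedding is built greedily inside the sets \<open>good_X\<close> and \<open>good_Y\<close> of vertices of \<open>X'\<close>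
  (resp. \<open>Y'\<close>) with more than \<open>3\<epsilon>|Y|\<close> (resp. \<open>3\<epsilon>|X|\<close>) neighbours on the other side. By
  regularity all but \<open>\<epsilon>|X|\<close> vertices of \<open>X'\<close> are good, so a good vertex adjacent to a given
  good vertex can always be found outside any set of at most \<open>2\<epsilon>|X|\<close> forbidden vertices.

  The statement is strengthened to forests and proved by induction on the number of vertices,
  with a set \<open>W\<close> of host vertices to be avoided, subject to \<open>|F1| + |W \<inter> X| \<le> \<epsilon>|X|\<close> and
  \<open>|F2| + |W \<inter> Y| \<le> \<epsilon>|Y|\<close>. A leaf outside \<open>R\<close> is deleted, the rest embedded, and the leaf
  mapped to a good neighbour of the image of its neighbour. If every leaf is prescribed, the
  forest is a path between the two vertices of \<open>R\<close> with an odd number \<open>n \<ge> 5\<close> of vertices.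
  For \<open>n \<ge> 7\<close> the first two vertices are embedded and the third one is prescribed in the
  smaller instance; for \<open>n = 5\<close> the middle vertex must have neighbours among good neighbours of
  both prescribed images, which regularity provides once more.
\<close>

lemma adj_commute: "adj E a b \<longleftrightarrow> adj E b a"
  by (simp add: adj_def insert_commute)

lemma graph_adjD:
  assumes "graph V E" "adj E a b"
  shows "a \<in> V" "b \<in> V" "a \<noteq> b"
proof -
  have "{a, b} \<subseteq> V" "card {a, b} = 2"
    using assms by (auto simp: graph_def adj_def)
  then show "a \<in> V" "b \<in> V" "a \<noteq> b"
    by (auto simp: card_insert_if split: if_splits)
qed

definition is_path :: "'b set set \<Rightarrow> 'b list \<Rightarrow> bool" where
  "is_path E P \<longleftrightarrow> distinct P \<and> (\<forall>i. Suc i < length P \<longrightarrow> adj E (P ! i) (P ! Suc i))"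

lemma is_path_Nil [simp]: "is_path E []"
  by (simp add: is_path_def)

lemma is_path_Cons:
  "is_path E (w # P) \<longleftrightarrow> w \<notin> set P \<and> is_path E P \<and> (P \<noteq> [] \<longrightarrow> adj E w (hd P))"
  by (auto simp: is_path_def hd_conv_nth nth_Cons split: nat.splits)

lemma is_path_take: "is_path E P \<Longrightarrow> is_path E (take k P)"
  by (simp add: is_path_def)

lemma is_path_drop: "is_path E P \<Longrightarrow> is_path E (drop k P)"
  by (auto simp: is_path_def)

lemma is_path_rev: "is_path E P \<Longrightarrow> is_path E (rev P)"
  unfolding is_path_def
proof (intro conjI allI impI)
  fix i assume P: "distinct P \<and> (\<forall>i. Suc i < length P \<longrightarrow> adj E (P ! i) (P ! Suc i))"
    and i: "Suc i < length (rev P)"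
  then have "adj E (P ! (length P - Suc (Suc i))) (P ! Suc (length P - Suc (Suc i)))"
    by auto
  moreover have "Suc (length P - Suc (Suc i)) = length P - Suc i"
    using i by auto
  ultimately show "adj E (rev P ! i) (rev P ! Suc i)"
    using i by (simp add: rev_nth adj_commute)
qed simp

lemma is_cycle_if_path: "is_path E P \<Longrightarrow> 3 \<le> length P \<Longrightarrow> adj E (last P) (hd P) \<Longrightarrow> is_cycle E P"
  by (simp add: is_path_def is_cycle_def)

lemma is_path_segment:
  assumes "is_path E P" "i \<le> j" "j < length P"
  defines "Q \<equiv> take (Suc j - i) (drop i P)"
  shows "is_path E Q" "length Q = Suc j - i" "hd Q = P ! i" "last Q = P ! j" "set Q \<subseteq> set P"
proof -
  show "is_path E Q" unfolding Q_def using assms by (intro is_path_take is_path_drop)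
  show "length Q = Suc j - i" unfolding Q_def using assms by auto
  show "hd Q = P ! i" unfolding Q_def using assms by (simp add: hd_conv_nth)
  show "last Q = P ! j" unfolding Q_def using assms by (simp add: last_conv_nth)
  show "set Q \<subseteq> set P" unfolding Q_def by (meson set_drop_subset set_take_subset subset_trans)
qed

lemma acyclic_path_adj_nth:
  assumes G: "graph V E" and A: "acyclic_graph E" and P: "is_path E P"
    and ij: "i < length P" "j < length P" and a: "adj E (P ! i) (P ! j)"
  shows "j = Suc i \<or> i = Suc j"
proof -
  have chord: "j = Suc i" if "i < j" "j < length P" "adj E (P ! i) (P ! j)" for i j
  proof (rule ccontr)
    assume "j \<noteq> Suc i"
    with that have "is_cycle E (take (Suc j - i) (drop i P))"
      using is_path_segment[OF P, of i j]
      by (intro is_cycle_if_path) (auto simp: adj_commute)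
    then show False using A by (auto simp: acyclic_graph_def)
  qed
  have "i \<noteq> j" using graph_adjD(3)[OF G a] by auto
  then consider "i < j" | "j < i" by linarith
  then show ?thesis
  proof cases
    case 1
    then show ?thesis using chord ij a by blast
  next
    case 2
    then show ?thesis using chord[of j i] ij a by (simp add: adj_commute)
  qed
qed

lemma acyclic_path_no_common_neighbour:
  assumes G: "graph V E" and A: "acyclic_graph E" and P: "is_path E P"
    and ij: "i + 2 < j" "j < length P" and a: "adj E (P ! i) w" "adj E (P ! j) w"
  shows False
proof (cases "w \<in> set P")
  case True
  then obtain k where "k < length P" "w = P ! k" by (metis in_set_conv_nth)
  then show False
    using acyclic_path_adj_nth[OF G A P, of i k] acyclic_path_adj_nth[OF G A P, of j k] ij a
    by auto
next
  case False
  define Q where "Q = take (Suc j - i) (drop i P)"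
  note seg = is_path_segment[OF P _ ij(2), of i, folded Q_def]
  have "Q \<noteq> []" using seg(2) ij by auto
  then have "is_path E (w # Q)"
    using False seg ij a(1) by (auto simp: is_path_Cons adj_commute)
  then have "is_cycle E (w # Q)"
    using seg ij a(2) \<open>Q \<noteq> []\<close> by (intro is_cycle_if_path) auto
  then show False using A by (auto simp: acyclic_graph_def)
qed

definition longest_path :: "'b set \<Rightarrow> 'b set set \<Rightarrow> 'b list \<Rightarrow> bool" where
  "longest_path V E P \<longleftrightarrow> is_path E P \<and> set P \<subseteq> V \<and>
     (\<forall>Q. is_path E Q \<and> set Q \<subseteq> V \<longrightarrow> length Q \<le> length P)"

lemma longest_path_rev: "longest_path V E P \<Longrightarrow> longest_path V E (rev P)"
  by (simp add: longest_path_def is_path_rev)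

lemma longest_path_exists:
  assumes G: "graph V E" and "E \<noteq> {}"
  shows "\<exists>P. longest_path V E P \<and> 2 \<le> length P"
proof -
  obtain a b where ab: "{a, b} \<in> E" "a \<noteq> b"
    using assms unfolding graph_def by (metis card_2_iff ex_in_conv)
  have "is_path E [a, b]"
    using ab by (simp add: is_path_Cons adj_def)
  moreover have "set [a, b] \<subseteq> V"
    using G ab by (auto simp: graph_def)
  moreover have "length Q < Suc (card V)" if "is_path E Q" "set Q \<subseteq> V" for Q
  proof -
    have "length Q = card (set Q)"
      using that by (simp add: is_path_def distinct_card)
    also have "\<dots> \<le> card V"
      using that G by (intro card_mono) (auto simp: graph_def)
    finally show ?thesis by simp
  qed
  ultimately obtain P where "is_path E P \<and> set P \<subseteq> V"
    "\<forall>Q. is_path E Q \<and> set Q \<subseteq> V \<longrightarrow> length Q \<le> length P"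
    using Lattices_Big.ex_has_greatest_nat[of "\<lambda>Q. is_path E Q \<and> set Q \<subseteq> V" "[a, b]" length]
    by blast
  moreover from this have "2 \<le> length P"
    using \<open>is_path E [a, b]\<close> \<open>set [a, b] \<subseteq> V\<close> by fastforce
  ultimately show ?thesis unfolding longest_path_def by blast
qed

definition deg_le_1 :: "'b set set \<Rightarrow> 'b \<Rightarrow> bool" where
  "deg_le_1 E v \<longleftrightarrow> (\<forall>u w. adj E v u \<longrightarrow> adj E v w \<longrightarrow> u = w)"

lemma longest_path_first_neighbour:
  assumes G: "graph V E" and A: "acyclic_graph E" and M: "longest_path V E P"
    and l: "2 \<le> length P" and a: "adj E (P ! 0) u"
  shows "u = P ! 1"
proof (cases "u \<in> set P")
  case True
  then obtain j where j: "j < length P" "u = P ! j" by (metis in_set_conv_nth)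
  have "P \<noteq> []" using l by auto
  then have "j = 1"
    using acyclic_path_adj_nth[of V E P 0 j] G A M j a by (auto simp: longest_path_def)
  then show ?thesis using j by simp
next
  case False
  have "is_path E (u # P)"
    using False M l a by (auto simp: longest_path_def is_path_Cons hd_conv_nth adj_commute)
  moreover have "set (u # P) \<subseteq> V"
    using M graph_adjD(2)[OF G a] by (auto simp: longest_path_def)
  ultimately show ?thesis
    using M by (fastforce simp: longest_path_def)
qed

lemma longest_path_first_deg_le_1:
  "graph V E \<Longrightarrow> acyclic_graph E \<Longrightarrow> longest_path V E P \<Longrightarrow> 2 \<le> length P \<Longrightarrow> deg_le_1 E (P ! 0)"
  unfolding deg_le_1_def using longest_path_first_neighbour by metis

text \<open>A neighbour off the path could replace the first vertex, giving a longest path whose first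
  vertex is a leaf off the original path.\<close>
lemma longest_path_second_neighbour:
  assumes G: "graph V E" and A: "acyclic_graph E" and M: "longest_path V E P"
    and l: "3 \<le> length P" and leaves: "\<forall>v\<in>V. deg_le_1 E v \<longrightarrow> v \<in> set P"
    and a: "adj E (P ! 1) u"
  shows "u = P ! 0 \<or> u = P ! 2"
proof (cases "u \<in> set P")
  case True
  then obtain j where j: "j < length P" "u = P ! j" by (metis in_set_conv_nth)
  have "j = 2 \<or> j = 0"
    using acyclic_path_adj_nth[of V E P 1 j] G A M l j a by (auto simp: longest_path_def)
  then show ?thesis using j by auto
next
  case False
  define Q where "Q = u # tl P"
  have P: "is_path E P" "set P \<subseteq> V" using M by (auto simp: longest_path_def)
  have "tl P = drop 1 P" by (simp add: drop_Suc)
  then have tl: "is_path E (tl P)" "set (tl P) \<subseteq> set P" "hd (tl P) = P ! 1" "tl P \<noteq> []"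
    using P(1) l is_path_drop[of E P 1] set_drop_subset[of 1 P] by (auto simp: hd_conv_nth)
  have "longest_path V E Q"
    using M False tl a graph_adjD(2)[OF G a]
    by (auto simp: longest_path_def Q_def is_path_Cons adj_commute)
  then have "deg_le_1 E u"
    using longest_path_first_deg_le_1[OF G A] l by (fastforce simp: Q_def)
  then show ?thesis
    using False leaves graph_adjD(2)[OF G a] by blast
qed

lemma colour_classes_commute: "colour_classes V E F1 F2 \<longleftrightarrow> colour_classes V E F2 F1"
  unfolding colour_classes_def by blast

lemma colour_classes_adj:
  assumes G: "graph V E" and C: "colour_classes V E F1 F2" and a: "adj E u v" and u: "u \<in> F1"
  shows "v \<in> F2"
proof -
  have "card ({u, v} \<inter> F1) = 1"
    using C a by (auto simp: colour_classes_def adj_def)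
  moreover have "u \<noteq> v" "v \<in> V"
    using graph_adjD[OF G a] by auto
  ultimately show ?thesis
    using C u by (auto simp: colour_classes_def card_insert_if split: if_splits)
qed

lemma path_colour_parity:
  assumes G: "graph V E" and C: "colour_classes V E F1 F2" and P: "is_path E P"
    and P0: "P ! 0 \<in> F1" and i: "i < length P"
  shows "P ! i \<in> (if even i then F1 else F2)"
  using i
proof (induction i)
  case (Suc i)
  then have "adj E (P ! i) (P ! Suc i)"
    using P by (simp add: is_path_def)
  moreover have "colour_classes V E F2 F1"
    using C colour_classes_commute by blast
  ultimately show ?case
    using Suc colour_classes_adj[OF G C] colour_classes_adj[OF G] by (auto split: if_splits)
qed (use P0 in simp)

lemma longest_path_start:
  assumes G: "graph V E" and A: "acyclic_graph E" and C: "colour_classes V E F1 F2"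
    and M: "longest_path V E P" and n: "3 \<le> length P"
    and leaves: "\<forall>v\<in>V. deg_le_1 E v \<longrightarrow> v \<in> set P" and P0: "P ! 0 \<in> F1"
  shows "P ! 0 \<notin> F2" "P ! 1 \<in> F2" "P ! 1 \<notin> F1" "P ! 2 \<in> F1"
    and "adj E (P ! 0) u \<Longrightarrow> u = P ! 1" and "adj E (P ! 1) u \<Longrightarrow> u = P ! 0 \<or> u = P ! 2"
proof -
  have P: "is_path E P" using M by (simp add: longest_path_def)
  show "P ! 1 \<in> F2" "P ! 2 \<in> F1"
    using path_colour_parity[OF G C P P0, of 1] path_colour_parity[OF G C P P0, of 2] n by auto
  then show "P ! 0 \<notin> F2" "P ! 1 \<notin> F1"
    using P0 C by (auto simp: colour_classes_def)
  show "adj E (P ! 0) u \<Longrightarrow> u = P ! 1"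
    using longest_path_first_neighbour[OF G A M] n by simp
  show "adj E (P ! 1) u \<Longrightarrow> u = P ! 0 \<or> u = P ! 2"
    using longest_path_second_neighbour[OF G A M n leaves] by simp
qed

definition remove_vertices :: "'b set set \<Rightarrow> 'b set \<Rightarrow> 'b set set" where
  "remove_vertices E S = {e\<in>E. e \<inter> S = {}}"

lemma adj_remove_vertices: "adj (remove_vertices E S) a b \<longleftrightarrow> adj E a b \<and> a \<notin> S \<and> b \<notin> S"
  unfolding adj_def remove_vertices_def by auto

lemma graph_remove_vertices: "graph V E \<Longrightarrow> graph (V - S) (remove_vertices E S)"
  unfolding graph_def remove_vertices_def by blast

lemma acyclic_remove_vertices: "acyclic_graph E \<Longrightarrow> acyclic_graph (remove_vertices E S)"
  unfolding acyclic_graph_def is_cycle_def adj_remove_vertices by blast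

lemma colour_classes_remove_vertices:
  "colour_classes V E F1 F2 \<Longrightarrow> colour_classes (V - S) (remove_vertices E S) (F1 - S) (F2 - S)"
  unfolding colour_classes_def remove_vertices_def by (auto simp: Diff_Int_distrib Int_Diff[symmetric])

definition admissible_forest :: "'b set \<Rightarrow> 'b set set \<Rightarrow> 'b set \<Rightarrow> 'b set \<Rightarrow> 'b set \<Rightarrow> bool" where
  "admissible_forest V E F1 F2 R \<longleftrightarrow> graph V E \<and> acyclic_graph E \<and> colour_classes V E F1 F2 \<and>
     R \<subseteq> F1 \<and> card R \<le> 2 \<and> (card R = 2 \<longrightarrow> \<not> (\<exists>w\<in>V. \<forall>r\<in>R. adj E r w))"

lemma admissible_forest_remove_vertices:
  assumes "admissible_forest V E F1 F2 R" "R' \<subseteq> F1 - S" "card R' \<le> 2"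
    "card R' = 2 \<Longrightarrow> \<not> (\<exists>w\<in>V. \<forall>r\<in>R'. adj E r w)"
  shows "admissible_forest (V - S) (remove_vertices E S) (F1 - S) (F2 - S) R'"
  using assms graph_remove_vertices acyclic_remove_vertices colour_classes_remove_vertices
  by (auto simp: admissible_forest_def adj_remove_vertices)

text \<open>Both ends are leaves, hence prescribed; as both lie in \<open>F1\<close> the path has an odd number of
  vertices, and not three, since the prescribed vertices have no common neighbour.\<close>
lemma longest_path_between_prescribed:
  assumes forest: "admissible_forest V E F1 F2 R" and leaves: "\<forall>v\<in>V. deg_le_1 E v \<longrightarrow> v \<in> R"
    and M: "longest_path V E P" and n: "2 \<le> length P"
  shows "R = {P ! 0, P ! (length P - 1)}" "length P = 5 \<or> 6 \<le> length P"
    and "\<forall>v\<in>V. deg_le_1 E v \<longrightarrow> v \<in> set P"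
proof -
  have G: "graph V E" and A: "acyclic_graph E" and C: "colour_classes V E F1 F2"
    and "R \<subseteq> F1" "card R \<le> 2" and R2: "card R = 2 \<Longrightarrow> \<not> (\<exists>w\<in>V. \<forall>r\<in>R. adj E r w)"
    using forest by (simp_all add: admissible_forest_def)
  have P: "is_path E P" "set P \<subseteq> V"
    using M by (simp_all add: longest_path_def)
  let ?z = "P ! (length P - 1)"
  have l: "0 < length P" "length P - 1 < length P"
    using n by linarith+
  have "rev P ! 0 = ?z"
    using l(1) by (simp add: rev_nth)
  moreover have "P ! 0 \<in> V" "?z \<in> V"
    using P(2) nth_mem[OF l(1)] nth_mem[OF l(2)] by blast+
  ultimately have ends: "P ! 0 \<in> R" "?z \<in> R"
    using leaves n longest_path_first_deg_le_1[OF G A M n]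
      longest_path_first_deg_le_1[OF G A longest_path_rev[OF M]] by auto
  moreover have "P ! 0 \<noteq> ?z"
    using P(1) l n by (simp add: is_path_def nth_eq_iff_index_eq del: length_greater_0_conv)
  moreover have "finite R"
    using G C \<open>R \<subseteq> F1\<close> by (auto simp: graph_def colour_classes_def intro: finite_subset)
  ultimately show R: "R = {P ! 0, ?z}"
    using card_seteq[of R "{P ! 0, ?z}"] \<open>card R \<le> 2\<close> by auto
  then show "\<forall>v\<in>V. deg_le_1 E v \<longrightarrow> v \<in> set P"
    using leaves nth_mem[OF l(1)] nth_mem[OF l(2)] by auto
  have in_F1: "P ! 0 \<in> F1" "?z \<in> F1"
    using ends \<open>R \<subseteq> F1\<close> by auto
  then have "?z \<in> (if even (length P - 1) then F1 else F2)"
    using path_colour_parity[OF G C P(1) _ l(2)] by blast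
  then have "even (length P - 1)"
    using in_F1(2) C by (cases "even (length P - 1)") (auto simp: colour_classes_def)
  then obtain k where "length P - 1 = 2 * k"
    by (rule evenE)
  moreover have "length P \<noteq> 3"
  proof
    assume "length P = 3"
    then have "adj E (P ! 0) (P ! 1)" "adj E (P ! 2) (P ! 1)" "P ! 1 \<in> V"
      using P by (auto simp: is_path_def adj_commute numeral_2_eq_2)
    then show False
      using R2 R \<open>P ! 0 \<noteq> ?z\<close> \<open>length P = 3\<close> by auto
  qed
  ultimately show "length P = 5 \<or> 6 \<le> length P"
    using n by presburger
qed

lemma cross_edges_commute: "cross_edges E X Y = cross_edges E Y X"
  unfolding cross_edges_def by (auto simp: insert_commute)

lemma density_commute: "density E X Y = density E Y X"
  by (simp add: density_def cross_edges_commute mult.commute)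

lemma eps_regular_commute:
  assumes "eps_regular E \<epsilon> X Y"
  shows "eps_regular E \<epsilon> Y X"
  unfolding eps_regular_def
proof (intro allI impI)
  fix B A assume "B \<subseteq> Y \<and> A \<subseteq> X \<and> \<epsilon> * real (card Y) \<le> real (card B) \<and> \<epsilon> * real (card X) \<le> real (card A)"
  then have "\<bar>density E A B - density E X Y\<bar> \<le> \<epsilon>"
    using assms unfolding eps_regular_def by blast
  then show "\<bar>density E B A - density E Y X\<bar> \<le> \<epsilon>"
    by (simp add: density_commute[of E B] density_commute[of E Y])
qed

lemma eps_regularD:
  assumes "eps_regular E \<epsilon> X Y" "A \<subseteq> X" "B \<subseteq> Y"
    "\<epsilon> * real (card X) \<le> real (card A)" "\<epsilon> * real (card Y) \<le> real (card B)"
  shows "density E X Y - \<epsilon> \<le> density E A B"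
proof -
  have "\<bar>density E A B - density E X Y\<bar> \<le> \<epsilon>"
    using assms unfolding eps_regular_def by blast
  then show ?thesis by linarith
qed

lemma card_cross_edges_le:
  assumes "finite A" "finite B"
  shows "card (cross_edges E A B) \<le> (\<Sum>x\<in>A. card (neighbours_in E x B))"
proof -
  have "cross_edges E A B \<subseteq> (\<Union>x\<in>A. (\<lambda>y. {x, y}) ` neighbours_in E x B)"
    unfolding cross_edges_def neighbours_in_def adj_def by auto
  then have "card (cross_edges E A B) \<le> card (\<Union>x\<in>A. (\<lambda>y. {x, y}) ` neighbours_in E x B)"
    using assms by (intro card_mono) (auto simp: neighbours_in_def)
  also have "\<dots> \<le> (\<Sum>x\<in>A. card ((\<lambda>y. {x, y}) ` neighbours_in E x B))"
    by (rule card_UN_le) (use assms in auto)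
  also have "\<dots> \<le> (\<Sum>x\<in>A. card (neighbours_in E x B))"
    by (intro sum_mono card_image_le) (use assms in \<open>auto simp: neighbours_in_def\<close>)
  finally show ?thesis .
qed

lemma density_le_1:
  assumes "finite X" "finite Y"
  shows "density E X Y \<le> 1"
proof -
  have "(\<Sum>x\<in>X. card (neighbours_in E x Y)) \<le> (\<Sum>x\<in>X. card Y)"
    by (intro sum_mono card_mono) (auto simp: neighbours_in_def assms)
  then have "card (cross_edges E X Y) \<le> card X * card Y"
    using card_cross_edges_le[OF assms, of E] by simp
  then have "real (card (cross_edges E X Y)) \<le> real (card X) * real (card Y)"
    by (metis of_nat_le_iff of_nat_mult)
  then show ?thesis
    unfolding density_def by (cases "card X = 0 \<or> card Y = 0") (auto simp: divide_le_eq_1)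
qed

lemma eps_regular_typical_degree:
  assumes reg: "eps_regular E \<epsilon> X Y" and eps: "\<epsilon> > 0" and X: "finite X" "X \<noteq> {}"
    and Y': "finite Y'" "Y' \<subseteq> Y" "\<epsilon> * real (card Y) \<le> real (card Y')"
  shows "real (card {x\<in>X. real (card (neighbours_in E x Y')) < (density E X Y - \<epsilon>) * real (card Y')})
           < \<epsilon> * real (card X)"
proof (rule ccontr)
  define d where "d = density E X Y - \<epsilon>"
  define B where "B = {x\<in>X. real (card (neighbours_in E x Y')) < d * real (card Y')}"
  assume "\<not> ?thesis"
  then have B_large: "\<epsilon> * real (card X) \<le> real (card B)"
    by (simp add: B_def d_def)
  have fin: "finite B" "B \<subseteq> X"
    using X by (auto simp: B_def)
  have "0 < \<epsilon> * real (card X)"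
    using eps X by (simp add: card_gt_0_iff)
  then have "0 < card B"
    using B_large by linarith
  then obtain x0 where "x0 \<in> B"
    by (metis card_gt_0_iff ex_in_conv)
  then have "0 < card Y'"
    by (cases "card Y' = 0") (auto simp: B_def)
  with \<open>0 < card B\<close> have pos: "0 < real (card B) * real (card Y')"
    by simp
  have "real (card (cross_edges E B Y')) \<le> (\<Sum>x\<in>B. real (card (neighbours_in E x Y')))"
    using card_cross_edges_le[OF fin(1) Y'(1), of E] by (metis of_nat_le_iff of_nat_sum)
  also have "\<dots> < (\<Sum>x\<in>B. d * real (card Y'))"
    using fin \<open>x0 \<in> B\<close> by (intro sum_strict_mono) (auto simp: B_def)
  also have "\<dots> = d * (real (card B) * real (card Y'))"
    by simp
  finally have "density E B Y' < d"
    using pos by (simp add: density_def divide_less_eq)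
  moreover have "d \<le> density E B Y'"
    unfolding d_def using eps_regularD[OF reg fin(2) Y'(2) B_large Y'(3)] .
  ultimately show False by simp
qed

locale dense_regular_pair =
  fixes V :: "'a set" and E :: "'a set set" and X Y X' Y' :: "'a set" and \<epsilon> \<alpha> :: real
  assumes graph: "graph V E" and X_sub: "X \<subseteq> V" and Y_sub: "Y \<subseteq> V" and disjoint: "X \<inter> Y = {}"
    and regular: "eps_regular E \<epsilon> X Y" and dense: "density E X Y > 3 * \<alpha>"
    and eps: "\<epsilon> > 0" and alpha: "\<alpha> > 2 * \<epsilon>"
    and X'_sub: "X' \<subseteq> X" and X'_large: "real (card X') > 2 * (\<epsilon> / \<alpha>) * real (card X)"
    and Y'_sub: "Y' \<subseteq> Y" and Y'_large: "real (card Y') > 2 * (\<epsilon> / \<alpha>) * real (card Y)"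

text \<open>The hypotheses are symmetric under exchanging \<open>(X, X')\<close> with \<open>(Y, Y')\<close>; the
  interpretation \<open>swap\<close> supplies every later fact with the two sides exchanged, and \<open>good_Y\<close>
  is \<open>swap.good_X\<close>.\<close>
sublocale dense_regular_pair \<subseteq> swap: dense_regular_pair V E Y X Y' X' \<epsilon> \<alpha>
  using graph X_sub Y_sub disjoint eps_regular_commute[OF regular] dense eps alpha
    X'_sub X'_large Y'_sub Y'_large
  by unfold_locales (auto simp: density_commute)

context dense_regular_pair
begin

lemma finite_X: "finite X" and finite_X': "finite X'"
  using graph X_sub X'_sub by (auto simp: graph_def intro: finite_subset)

lemma X_nonempty: "X \<noteq> {}"
  using dense alpha eps by (auto simp: density_def)

lemma three_alpha_lt_1: "3 * \<alpha> < 1"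
proof -
  have "finite Y"
    using graph Y_sub by (auto simp: graph_def intro: finite_subset)
  then show ?thesis
    using dense density_le_1[OF finite_X, of Y E] by linarith
qed

lemma card_X'_gt: "3 * \<epsilon> * real (card X) < real (card X')"
proof -
  have "3 * \<epsilon> \<le> 2 * (\<epsilon> / \<alpha>)"
    using three_alpha_lt_1 alpha eps by (simp add: field_simps)
  then have "3 * \<epsilon> * real (card X) \<le> 2 * (\<epsilon> / \<alpha>) * real (card X)"
    by (intro mult_right_mono) auto
  then show ?thesis using X'_large by linarith
qed

lemma card_X'_ge: "\<epsilon> * real (card X) \<le> real (card X')"
proof -
  have "\<epsilon> * real (card X) \<le> 3 * \<epsilon> * real (card X)"
    using eps by simp
  then show ?thesis using card_X'_gt by linarith
qed

definition good_X :: "'a set" where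
  "good_X = {x\<in>X'. real (card (neighbours_in E x Y')) > 3 * \<epsilon> * real (card Y)}"

lemma good_X_sub: "good_X \<subseteq> X'"
  by (auto simp: good_X_def)

lemma good_X_subset: "good_X \<subseteq> X"
  using good_X_sub X'_sub by blast

end

context dense_regular_pair
begin

lemma good_X_threshold: "3 * \<epsilon> * real (card Y) < (density E X Y - \<epsilon>) * real (card Y')"
proof -
  have "5 / 2 * \<alpha> < density E X Y - \<epsilon>"
    using dense alpha by linarith
  moreover have "0 \<le> 3 * \<epsilon> * real (card Y)"
    using eps by simp
  then have "0 < real (card Y')"
    using swap.card_X'_gt by linarith
  ultimately have "5 / 2 * \<alpha> * real (card Y') < (density E X Y - \<epsilon>) * real (card Y')"
    by (intro mult_strict_right_mono)
  moreover have "2 * \<epsilon> * real (card Y) < \<alpha> * real (card Y')"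
    using Y'_large alpha eps by (simp add: field_simps)
  moreover have "0 \<le> \<epsilon> * real (card Y)"
    using eps by simp
  ultimately show ?thesis by linarith
qed

lemma card_X'_minus_good_X: "real (card (X' - good_X)) < \<epsilon> * real (card X)"
proof -
  let ?B = "{x\<in>X. real (card (neighbours_in E x Y')) < (density E X Y - \<epsilon>) * real (card Y')}"
  have "X' - good_X \<subseteq> ?B"
    using X'_sub good_X_threshold by (auto simp: good_X_def)
  then have "real (card (X' - good_X)) \<le> real (card ?B)"
    using finite_X by (intro of_nat_mono card_mono) auto
  also have "\<dots> < \<epsilon> * real (card X)"
    using eps_regular_typical_degree[OF regular eps finite_X X_nonempty swap.finite_X' Y'_sub swap.card_X'_ge] .
  finally show ?thesis .
qed

lemma card_without_neighbour_in:
  assumes S: "S \<subseteq> Y" "\<epsilon> * real (card Y) \<le> real (card S)"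
  shows "real (card {x\<in>X. \<forall>y\<in>S. \<not> adj E x y}) < \<epsilon> * real (card X)"
proof -
  let ?B = "{x\<in>X. real (card (neighbours_in E x S)) < (density E X Y - \<epsilon>) * real (card S)}"
  have "0 < \<epsilon> * real (card Y)"
    using eps swap.X_nonempty swap.finite_X by (simp add: card_gt_0_iff)
  then have "0 < (density E X Y - \<epsilon>) * real (card S)"
    using S dense alpha eps by (intro mult_pos_pos) linarith+
  moreover have "neighbours_in E x S = {}" if "\<forall>y\<in>S. \<not> adj E x y" for x
    using that by (auto simp: neighbours_in_def)
  ultimately have "{x\<in>X. \<forall>y\<in>S. \<not> adj E x y} \<subseteq> ?B"
    by auto
  then have "real (card {x\<in>X. \<forall>y\<in>S. \<not> adj E x y}) \<le> real (card ?B)"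
    using finite_X by (intro of_nat_mono card_mono) auto
  also have "\<dots> < \<epsilon> * real (card X)"
    using S swap.finite_X
    by (intro eps_regular_typical_degree[OF regular eps finite_X X_nonempty]) (auto intro: finite_subset)
  finally show ?thesis .
qed

lemma ex_good_X_avoiding:
  assumes T: "T \<subseteq> X'" "3 * \<epsilon> * real (card X) < real (card T)"
    and U: "finite U" "real (card U) \<le> 2 * \<epsilon> * real (card X)"
  shows "\<exists>p\<in>T. p \<in> good_X \<and> p \<notin> U"
proof (rule ccontr)
  assume "\<not> ?thesis"
  then have "T \<subseteq> (X' - good_X) \<union> U"
    using T by blast
  then have "card T \<le> card ((X' - good_X) \<union> U)"
    using finite_X' U by (intro card_mono) auto
  also have "\<dots> \<le> card (X' - good_X) + card U"
    by (rule card_Un_le)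
  finally have "card T \<le> card (X' - good_X) + card U" .
  then show False
    using T U card_X'_minus_good_X by linarith
qed

end

lemma real_card_Un_le: "real (card (A \<union> B)) \<le> real (card A) + real (card B)"
  using card_Un_le[of A B] by (metis of_nat_add of_nat_mono)

lemma card_remove_and_forbid_le:
  assumes "finite F" "finite W" "(W \<union> \<psi> ` S) \<inter> Z \<subseteq> (W \<inter> Z) \<union> \<psi> ` (S \<inter> F)"
  shows "card (F - S) + card ((W \<union> \<psi> ` S) \<inter> Z) \<le> card F + card (W \<inter> Z)"
proof -
  have "card ((W \<union> \<psi> ` S) \<inter> Z) \<le> card ((W \<inter> Z) \<union> \<psi> ` (S \<inter> F))"
    using assms by (intro card_mono) auto
  also have "\<dots> \<le> card (W \<inter> Z) + card (\<psi> ` (S \<inter> F))"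
    by (rule card_Un_le)
  also have "\<dots> \<le> card (W \<inter> Z) + card (F \<inter> S)"
    using card_image_le[of "S \<inter> F" \<psi>] assms(1) by (simp add: Int_commute)
  finally show ?thesis
    using card_Diff_subset_Int[of F S] card_mono[OF assms(1), of "F \<inter> S"] assms(1) by auto
qed

context dense_regular_pair
begin

abbreviation good_Y :: "'a set" where
  "good_Y \<equiv> swap.good_X"

lemma good_X_good_Y_disjoint: "good_X \<inter> good_Y = {}"
  using good_X_subset swap.good_X_subset disjoint by blast

lemma ex_good_neighbour_avoiding:
  assumes x: "x \<in> good_X" and U: "finite U" "real (card U) \<le> 2 * \<epsilon> * real (card Y)"
  shows "\<exists>y\<in>good_Y. adj E x y \<and> y \<notin> U"
proof -
  have "neighbours_in E x Y' \<subseteq> Y'" "3 * \<epsilon> * real (card Y) < real (card (neighbours_in E x Y'))"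
    using x by (auto simp: neighbours_in_def good_X_def)
  then obtain y where "y \<in> neighbours_in E x Y'" "y \<in> good_Y" "y \<notin> U"
    using swap.ex_good_X_avoiding[OF _ _ U] by blast
  then show ?thesis
    by (auto simp: neighbours_in_def)
qed

definition embeds :: "'b set \<Rightarrow> 'b set set \<Rightarrow> 'b set \<Rightarrow> 'b set \<Rightarrow> 'a set \<Rightarrow> ('b \<Rightarrow> 'a) \<Rightarrow> bool" where
  "embeds VT ET F1 F2 W \<psi> \<longleftrightarrow> inj_on \<psi> VT \<and> (\<forall>u v. adj ET u v \<longrightarrow> adj E (\<psi> u) (\<psi> v)) \<and>
     \<psi> ` F1 \<subseteq> good_X \<and> \<psi> ` F2 \<subseteq> good_Y \<and> \<psi> ` VT \<inter> W = {}"

text \<open>\<open>W\<close> holds the host vertices already used outside the forest still to be embedded.\<close>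
definition within_budget :: "'b set \<Rightarrow> 'b set \<Rightarrow> 'a set \<Rightarrow> bool" where
  "within_budget F1 F2 W \<longleftrightarrow> finite F1 \<and> finite F2 \<and> finite W \<and>
     real (card F1 + card (W \<inter> X)) \<le> \<epsilon> * real (card X) \<and>
     real (card F2 + card (W \<inter> Y)) \<le> \<epsilon> * real (card Y)"

definition admissible_prescription :: "'b set \<Rightarrow> ('b \<Rightarrow> 'a) \<Rightarrow> 'a set \<Rightarrow> bool" where
  "admissible_prescription R \<phi> W \<longleftrightarrow> inj_on \<phi> R \<and> \<phi> ` R \<subseteq> good_X \<and> \<phi> ` R \<inter> W = {}"

lemma within_budget_mono:
  assumes "within_budget F1 F2 W" "F1' \<subseteq> F1" "F2' \<subseteq> F2"
  shows "within_budget F1' F2' W"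
proof -
  have "finite F1" "finite F2"
    using assms(1) by (simp_all add: within_budget_def)
  then have "finite F1'" "finite F2'" "real (card F1') \<le> real (card F1)" "real (card F2') \<le> real (card F2)"
    using assms(2,3) by (auto intro: card_mono finite_subset)
  then show ?thesis
    using assms(1) unfolding within_budget_def of_nat_add by linarith
qed

lemma within_budget_remove:
  assumes budget: "within_budget F1 F2 W" and S: "S \<subseteq> F1 \<union> F2"
    and g: "g ` (S \<inter> F1) \<subseteq> X" "g ` (S \<inter> F2) \<subseteq> Y"
  shows "within_budget (F1 - S) (F2 - S) (W \<union> g ` S)"
proof -
  have fin: "finite F1" "finite F2" "finite W"
    using budget by (simp_all add: within_budget_def)
  have "(W \<union> g ` S) \<inter> X \<subseteq> (W \<inter> X) \<union> g ` (S \<inter> F1)"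
    using S g(2) disjoint by blast
  then have "real (card (F1 - S) + card ((W \<union> g ` S) \<inter> X)) \<le> real (card F1 + card (W \<inter> X))"
    by (intro of_nat_mono card_remove_and_forbid_le[OF fin(1,3)])
  moreover have "(W \<union> g ` S) \<inter> Y \<subseteq> (W \<inter> Y) \<union> g ` (S \<inter> F2)"
    using S g(1) disjoint by blast
  then have "real (card (F2 - S) + card ((W \<union> g ` S) \<inter> Y)) \<le> real (card F2 + card (W \<inter> Y))"
    by (intro of_nat_mono card_remove_and_forbid_le[OF fin(2,3)])
  moreover have "finite S"
    using fin S finite_subset by blast
  ultimately show ?thesis
    using budget fin unfolding within_budget_def by auto
qed

lemma embeds_glue:
  assumes emb: "embeds (VT - S) (remove_vertices ET S) (F1 - S) (F2 - S) W' \<psi>'"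
    and agree: "\<And>v. v \<notin> S \<Longrightarrow> \<psi> v = \<psi>' v"
    and inj: "inj_on \<psi> (VT \<inter> S)" and fresh: "\<psi> ` (VT \<inter> S) \<inter> \<psi>' ` (VT - S) = {}"
    and W: "W \<subseteq> W'" "\<psi> ` (VT \<inter> S) \<inter> W = {}"
    and edges: "\<And>u v. adj ET u v \<Longrightarrow> u \<in> S \<Longrightarrow> adj E (\<psi> u) (\<psi> v)"
    and colours: "\<psi> ` (F1 \<inter> S) \<subseteq> good_X" "\<psi> ` (F2 \<inter> S) \<subseteq> good_Y"
  shows "embeds VT ET F1 F2 W \<psi>"
proof -
  have emb_inj: "inj_on \<psi>' (VT - S)"
    and emb_adj: "\<And>u v. adj (remove_vertices ET S) u v \<Longrightarrow> adj E (\<psi>' u) (\<psi>' v)"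
    and emb_X: "\<psi>' ` (F1 - S) \<subseteq> good_X" and emb_Y: "\<psi>' ` (F2 - S) \<subseteq> good_Y"
    and emb_W: "\<psi>' ` (VT - S) \<inter> W' = {}"
    using emb by (simp_all add: embeds_def)
  have image: "\<psi> ` A = \<psi>' ` A" if "A \<inter> S = {}" for A
    using that agree by (intro image_cong) blast+
  have split: "\<psi> ` A \<subseteq> \<psi> ` (A \<inter> S) \<union> \<psi>' ` (A - S)" for A
    using image[of "A - S"] by blast
  have "inj_on \<psi> (VT - S)"
    using emb_inj by (subst inj_on_cong[of _ \<psi> \<psi>']) (simp_all add: agree)
  moreover have "(VT - S) - (VT \<inter> S) = VT - S" "(VT \<inter> S) - (VT - S) = VT \<inter> S"
    by auto
  ultimately have "inj_on \<psi> ((VT - S) \<union> (VT \<inter> S))"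
    using inj fresh image[of "VT - S"] by (simp add: inj_on_Un Int_commute)
  then have "inj_on \<psi> VT"
    by (simp add: Un_Diff_Int)
  moreover have "adj E (\<psi> u) (\<psi> v)" if uv: "adj ET u v" for u v
  proof (cases "u \<in> S \<or> v \<in> S")
    case True
    then show ?thesis
      using edges[OF uv] edges[of v u] uv by (auto simp: adj_commute)
  next
    case False
    then show ?thesis
      using emb_adj agree uv by (simp add: adj_remove_vertices)
  qed
  moreover have "\<psi> ` F1 \<subseteq> good_X"
    using split[of F1] colours(1) emb_X by blast
  moreover have "\<psi> ` F2 \<subseteq> good_Y"
    using split[of F2] colours(2) emb_Y by blast
  moreover have "\<psi> ` VT \<inter> W = {}"
    using split[of VT] emb_W W by blast
  ultimately show ?thesis
    unfolding embeds_def by blast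
qed

end

context dense_regular_pair
begin

lemma obtain_good_X_adjacent:
  assumes N: "N \<subseteq> good_Y" "\<And>c c'. c \<in> N \<Longrightarrow> c' \<in> N \<Longrightarrow> c = c'"
    and U: "finite U" "real (card U) \<le> 2 * \<epsilon> * real (card X)"
  obtains p where "p \<in> good_X" "p \<notin> U" "\<And>c. c \<in> N \<Longrightarrow> adj E c p"
proof (cases "N = {}")
  case True
  then show ?thesis
    using ex_good_X_avoiding[OF order_refl card_X'_gt U] that by blast
next
  case False
  then obtain c where "N = {c}"
    using N(2) by blast
  then show ?thesis
    using swap.ex_good_neighbour_avoiding[OF _ U] N(1) that by blast
qed

lemma embeds_extend_leaf:
  assumes emb: "embeds (VT - {v}) (remove_vertices ET {v}) (F1 - {v}) (F2 - {v}) W \<psi>"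
    and G: "graph VT ET" and C: "colour_classes VT ET F1 F2" and v: "v \<in> F1"
    and leaf: "deg_le_1 ET v" and budget: "within_budget F1 F2 W"
  shows "\<exists>p. embeds VT ET F1 F2 W (\<psi>(v := p))"
proof -
  have emb_F1: "\<psi> ` (F1 - {v}) \<subseteq> good_X" and emb_F2: "\<psi> ` (F2 - {v}) \<subseteq> good_Y"
    using emb by (simp_all add: embeds_def)
  have fin: "finite F1" "finite W" and budget_X: "real (card F1 + card (W \<inter> X)) \<le> \<epsilon> * real (card X)"
    using budget by (simp_all add: within_budget_def)
  have "v \<notin> F2"
    using C v by (auto simp: colour_classes_def)
  define N where "N = \<psi> ` {u. adj ET v u}"
  have "N \<subseteq> good_Y"
    using emb_F2 colour_classes_adj[OF G C _ v] graph_adjD(3)[OF G] by (fastforce simp: N_def)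
  moreover have "c = c'" if "c \<in> N" "c' \<in> N" for c c'
    using that leaf by (auto simp: N_def deg_le_1_def)
  moreover define U where "U = (W \<inter> X) \<union> \<psi> ` (F1 - {v})"
  have "real (card (\<psi> ` (F1 - {v}))) \<le> real (card F1)"
    using fin(1) card_image_le[of "F1 - {v}" \<psi>] card_Diff1_le[of F1 v] by simp
  then have "real (card U) \<le> 2 * \<epsilon> * real (card X)"
    using real_card_Un_le[of "W \<inter> X" "\<psi> ` (F1 - {v})"] budget_X eps unfolding U_def by simp
  moreover have "finite U"
    using fin by (simp add: U_def)
  ultimately obtain p where p: "p \<in> good_X" "p \<notin> U" and p_adj: "\<And>c. c \<in> N \<Longrightarrow> adj E c p"
    using obtain_good_X_adjacent by metis
  have "VT - {v} = (F1 - {v}) \<union> (F2 - {v})"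
    using C by (auto simp: colour_classes_def)
  moreover have "p \<notin> \<psi> ` (F2 - {v})"
    using p emb_F2 good_X_good_Y_disjoint by blast
  ultimately have "p \<notin> \<psi> ` (VT - {v})"
    using p by (auto simp: U_def)
  moreover have "p \<notin> W"
    using p good_X_subset by (auto simp: U_def)
  moreover have "adj E ((\<psi>(v := p)) u) ((\<psi>(v := p)) w)" if "adj ET u w" "u \<in> {v}" for u w
    using that p_adj[of "\<psi> w"] graph_adjD(3)[OF G that(1)] by (auto simp: N_def adj_commute)
  moreover have "inj_on (\<psi>(v := p)) (VT \<inter> {v})"
    by (auto simp: inj_on_def)
  ultimately have "embeds VT ET F1 F2 W (\<psi>(v := p))"
    using p(1) \<open>v \<notin> F2\<close> by (intro embeds_glue[OF emb, of "\<psi>(v := p)"]) auto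
  then show ?thesis by blast
qed

end

context dense_regular_pair
begin

lemma swap_embeds: "swap.embeds VT ET F2 F1 W \<psi> \<longleftrightarrow> embeds VT ET F1 F2 W \<psi>"
  by (auto simp: embeds_def swap.embeds_def)

lemma swap_within_budget: "swap.within_budget F2 F1 W \<longleftrightarrow> within_budget F1 F2 W"
  by (auto simp: within_budget_def swap.within_budget_def)

lemma embeds_extend_deg_le_1:
  assumes "embeds (VT - {v}) (remove_vertices ET {v}) (F1 - {v}) (F2 - {v}) W \<psi>"
    and "graph VT ET" "colour_classes VT ET F1 F2" "v \<in> VT"
    and "deg_le_1 ET v" "within_budget F1 F2 W"
  shows "\<exists>p. embeds VT ET F1 F2 W (\<psi>(v := p))"
proof (cases "v \<in> F1")
  case True
  then show ?thesis by (rule embeds_extend_leaf[OF assms(1-3) _ assms(5-6)])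
next
  case False
  then have "v \<in> F2" using assms(3,4) by (auto simp: colour_classes_def)
  moreover have "colour_classes VT ET F2 F1"
    using assms(3) colour_classes_commute by blast
  ultimately have "\<exists>p. swap.embeds VT ET F2 F1 W (\<psi>(v := p))"
    using assms by (intro swap.embeds_extend_leaf) (simp_all add: swap_embeds swap_within_budget)
  then show ?thesis by (simp add: swap_embeds)
qed

end

context dense_regular_pair
begin

definition embedding_problem ::
    "'b set \<Rightarrow> 'b set set \<Rightarrow> 'b set \<Rightarrow> 'b set \<Rightarrow> 'b set \<Rightarrow> ('b \<Rightarrow> 'a) \<Rightarrow> 'a set \<Rightarrow> bool" where
  "embedding_problem VT ET F1 F2 R \<phi> W \<longleftrightarrow>
     admissible_forest VT ET F1 F2 R \<and> within_budget F1 F2 W \<and> admissible_prescription R \<phi> W"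

definition solvable ::
    "'b set \<Rightarrow> 'b set set \<Rightarrow> 'b set \<Rightarrow> 'b set \<Rightarrow> 'b set \<Rightarrow> ('b \<Rightarrow> 'a) \<Rightarrow> 'a set \<Rightarrow> bool" where
  "solvable VT ET F1 F2 R \<phi> W \<longleftrightarrow> (\<exists>\<psi>. embeds VT ET F1 F2 W \<psi> \<and> (\<forall>r\<in>R. \<psi> r = \<phi> r))"

lemma embedding_problemD:
  assumes "embedding_problem VT ET F1 F2 R \<phi> W"
  shows "graph VT ET" "acyclic_graph ET" "colour_classes VT ET F1 F2" "R \<subseteq> F1"
    "within_budget F1 F2 W" "admissible_prescription R \<phi> W"
  using assms by (simp_all add: embedding_problem_def admissible_forest_def)

text \<open>Embed the vertices of \<open>S\<close> by \<open>g\<close>, forbid their images, and prescribe the images \<open>\<phi>'\<close> of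
  the neighbours of \<open>S\<close> in the remaining forest.\<close>
lemma solvable_by_removal:
  fixes VT :: "'b set"
  assumes prob: "embedding_problem VT ET F1 F2 R \<phi> W"
    and IH: "\<And>VT' ET' F1' F2' R' \<phi>' W'. card (VT' :: 'b set) < card VT \<Longrightarrow>
               embedding_problem VT' ET' F1' F2' R' \<phi>' W' \<Longrightarrow> solvable VT' ET' F1' F2' R' \<phi>' W'"
    and S: "S \<subseteq> VT" "S \<noteq> {}"
    and g: "inj_on g S" "g ` (S \<inter> F1) \<subseteq> good_X" "g ` (S \<inter> F2) \<subseteq> good_Y" "g ` S \<inter> W = {}"
    and R'_forest: "R' \<subseteq> F1 - S" "card R' \<le> 2" "card R' = 2 \<Longrightarrow> \<not> (\<exists>w\<in>VT. \<forall>r\<in>R'. adj ET r w)"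
    and R'_prescription: "inj_on \<phi>' R'" "\<phi>' ` R' \<subseteq> good_X" "\<phi>' ` R' \<inter> (W \<union> g ` S) = {}"
    and R_agree: "\<And>r. r \<in> R \<Longrightarrow> r \<in> S \<Longrightarrow> g r = \<phi> r" "\<And>r. r \<in> R \<Longrightarrow> r \<notin> S \<Longrightarrow> r \<in> R' \<and> \<phi>' r = \<phi> r"
    and edges_inside: "\<And>u v. adj ET u v \<Longrightarrow> u \<in> S \<Longrightarrow> v \<in> S \<Longrightarrow> adj E (g u) (g v)"
    and edges_out: "\<And>u v. adj ET u v \<Longrightarrow> u \<in> S \<Longrightarrow> v \<notin> S \<Longrightarrow> v \<in> R' \<and> adj E (g u) (\<phi>' v)"
  shows "solvable VT ET F1 F2 R \<phi> W"
proof -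
  have forest: "admissible_forest VT ET F1 F2 R" and budget: "within_budget F1 F2 W"
    using prob by (simp_all add: embedding_problem_def)
  then have G: "graph VT ET" and C: "colour_classes VT ET F1 F2"
    by (simp_all add: admissible_forest_def)
  then have fin: "finite VT" "S \<subseteq> F1 \<union> F2"
    using S by (auto simp: graph_def colour_classes_def)
  define W' where "W' = W \<union> g ` S"
  have reduced: "embedding_problem (VT - S) (remove_vertices ET S) (F1 - S) (F2 - S) R' \<phi>' W'"
    unfolding embedding_problem_def admissible_prescription_def W'_def
  proof (intro conjI)
    show "admissible_forest (VT - S) (remove_vertices ET S) (F1 - S) (F2 - S) R'"
      using forest R'_forest by (rule admissible_forest_remove_vertices)
    show "within_budget (F1 - S) (F2 - S) (W \<union> g ` S)"
      using budget fin g good_X_subset swap.good_X_subset by (intro within_budget_remove) auto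
  qed (use R'_prescription in auto)
  have smaller: "card (VT - S) < card VT"
    using S fin by (intro psubset_card_mono) auto
  obtain \<psi>' where emb: "embeds (VT - S) (remove_vertices ET S) (F1 - S) (F2 - S) W' \<psi>'"
    and \<psi>'_R': "\<forall>r\<in>R'. \<psi>' r = \<phi>' r"
    using IH[OF smaller reduced] unfolding solvable_def by blast
  define \<psi> where "\<psi> v = (if v \<in> S then g v else \<psi>' v)" for v
  have "\<psi>' ` (VT - S) \<inter> W' = {}"
    using emb by (simp add: embeds_def)
  then have "\<psi> ` (VT \<inter> S) \<inter> \<psi>' ` (VT - S) = {}"
    by (auto simp: \<psi>_def W'_def)
  moreover have "adj E (\<psi> u) (\<psi> v)" if "adj ET u v" "u \<in> S" for u v
    using edges_inside[OF that] edges_out[OF that] \<psi>'_R' that by (cases "v \<in> S") (auto simp: \<psi>_def)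
  moreover have "inj_on \<psi> (VT \<inter> S)"
    using g(1) by (auto simp: \<psi>_def inj_on_def)
  ultimately have "embeds VT ET F1 F2 W \<psi>"
    using g by (intro embeds_glue[OF emb]) (auto simp: \<psi>_def W'_def)
  moreover have "\<forall>r\<in>R. \<psi> r = \<phi> r"
    using R_agree \<psi>'_R' by (auto simp: \<psi>_def)
  ultimately show ?thesis
    unfolding solvable_def by blast
qed

end

context dense_regular_pair
begin

lemma obtain_good_path_start:
  assumes a: "a \<in> good_X" and budget: "within_budget F1 F2 W" "2 \<le> card F1"
  obtains c x
  where "c \<in> good_Y" "x \<in> good_X" "adj E a c" "adj E c x" "c \<notin> W" "x \<notin> W \<union> {a, z}"
proof -
  have W: "finite W" "real (card F1) + real (card (W \<inter> X)) \<le> \<epsilon> * real (card X)"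
    "real (card F2) + real (card (W \<inter> Y)) \<le> \<epsilon> * real (card Y)"
    using budget by (simp_all add: within_budget_def)
  have "real (card (W \<inter> Y)) \<le> 2 * \<epsilon> * real (card Y)"
    using W(3) eps by simp
  moreover have "finite (W \<inter> Y)"
    using W(1) by simp
  ultimately obtain c where c: "c \<in> good_Y" "adj E a c" "c \<notin> W \<inter> Y"
    using ex_good_neighbour_avoiding[OF a] by blast
  have "real (card {a, z}) \<le> 2"
    by (simp add: card_insert_if)
  then have "real (card (W \<inter> X \<union> {a, z})) \<le> real (card (W \<inter> X)) + 2"
    using real_card_Un_le[of "W \<inter> X" "{a, z}"] by linarith
  moreover have "2 \<le> real (card F1)"
    using budget(2) by simp
  ultimately have "real (card (W \<inter> X \<union> {a, z})) \<le> 2 * \<epsilon> * real (card X)"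
    using W(2) eps by simp
  moreover have "finite (W \<inter> X \<union> {a, z})"
    using W(1) by simp
  ultimately obtain x where x: "x \<in> good_X" "adj E c x" "x \<notin> W \<inter> X \<union> {a, z}"
    using swap.ex_good_neighbour_avoiding[OF c(1)] by blast
  have "c \<notin> W" "x \<notin> W \<union> {a, z}"
    using c(1,3) x(1,3) good_X_subset swap.good_X_subset by blast+
  then show ?thesis
    using that c x by blast
qed

text \<open>The middle vertex \<open>x\<close> is taken adjacent to \<open>c1\<close> and outside the fewer than \<open>\<epsilon>|X|\<close>
  vertices with no neighbour among the candidates for \<open>c3\<close>; regularity makes this possible.\<close>
lemma obtain_good_path_between:
  assumes a: "a \<in> good_X" and z: "z \<in> good_X"
    and budget: "within_budget F1 F2 W" "3 \<le> card F1" "2 \<le> card F2"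
  obtains c1 x c3 where "c1 \<in> good_Y" "x \<in> good_X" "c3 \<in> good_Y"
    "adj E a c1" "adj E c1 x" "adj E x c3" "adj E z c3" "c1 \<notin> W" "c3 \<notin> W" "c1 \<noteq> c3"
    "x \<notin> W \<union> {a, z}"
proof -
  have W: "finite W" "real (card F1) + real (card (W \<inter> X)) \<le> \<epsilon> * real (card X)"
    "real (card F2) + real (card (W \<inter> Y)) \<le> \<epsilon> * real (card Y)"
    using budget by (simp_all add: within_budget_def)
  have F: "3 \<le> real (card F1)" "2 \<le> real (card F2)"
    using budget(2,3) by simp_all
  have "real (card (W \<inter> Y)) \<le> 2 * \<epsilon> * real (card Y)"
    using W(3) eps by simp
  moreover have "finite (W \<inter> Y)"
    using W(1) by simp
  ultimately obtain c1 where c1: "c1 \<in> good_Y" "adj E a c1" "c1 \<notin> W \<inter> Y"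
    using ex_good_neighbour_avoiding[OF a] by blast
  then have "c1 \<notin> W" using swap.good_X_subset by blast
  define N where "N = neighbours_in E z Y'"
  define S where "S = (N \<inter> good_Y) - W - {c1}"
  have "N \<subseteq> S \<union> (Y' - good_Y) \<union> (W \<inter> Y) \<union> {c1}"
    using Y'_sub by (auto simp: N_def S_def neighbours_in_def)
  then have "real (card N) \<le> real (card (S \<union> (Y' - good_Y) \<union> (W \<inter> Y) \<union> {c1}))"
    using swap.finite_X' W(1) by (intro of_nat_mono card_mono) (auto simp: S_def N_def neighbours_in_def)
  then have "real (card N) \<le> real (card S) + real (card (Y' - good_Y)) + real (card (W \<inter> Y)) + 1"
    using real_card_Un_le[of "S \<union> (Y' - good_Y) \<union> (W \<inter> Y)" "{c1}"]
      real_card_Un_le[of "S \<union> (Y' - good_Y)" "W \<inter> Y"] real_card_Un_le[of S "Y' - good_Y"] by simp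
  moreover have "3 * \<epsilon> * real (card Y) < real (card N)"
    using z by (simp add: good_X_def N_def)
  ultimately have S_large: "\<epsilon> * real (card Y) \<le> real (card S)"
    using swap.card_X'_minus_good_X W(3) F(2) by linarith
  have "S \<subseteq> Y"
    using swap.good_X_subset by (auto simp: S_def)
  define U where "U = W \<inter> X \<union> {a, z} \<union> {x\<in>X. \<forall>y\<in>S. \<not> adj E x y}"
  have "real (card {x\<in>X. \<forall>y\<in>S. \<not> adj E x y}) < \<epsilon> * real (card X)"
    by (rule card_without_neighbour_in[OF \<open>S \<subseteq> Y\<close> S_large])
  moreover have "real (card {a, z}) \<le> 2"
    by (simp add: card_insert_if)
  ultimately have "real (card U) \<le> 2 * \<epsilon> * real (card X)"
    using real_card_Un_le[of "W \<inter> X \<union> {a, z}" "{x\<in>X. \<forall>y\<in>S. \<not> adj E x y}"]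
      real_card_Un_le[of "W \<inter> X" "{a, z}"] W(2) F(1) unfolding U_def by linarith
  moreover have "finite U"
    using W(1) finite_X by (simp add: U_def)
  ultimately obtain x where x: "x \<in> good_X" "adj E c1 x" "x \<notin> U"
    using swap.ex_good_neighbour_avoiding[OF c1(1)] by blast
  then have "x \<notin> W \<union> {a, z}"
    using good_X_subset by (auto simp: U_def)
  obtain c3 where "c3 \<in> S" "adj E x c3"
    using x good_X_subset by (auto simp: U_def)
  then have "c3 \<in> good_Y" "c3 \<notin> W" "c1 \<noteq> c3" "adj E z c3"
    by (auto simp: S_def N_def neighbours_in_def)
  then show ?thesis
    using that c1(1,2) \<open>c1 \<notin> W\<close> x(1,2) \<open>adj E x c3\<close> \<open>x \<notin> W \<union> {a, z}\<close> by blast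
qed

lemma solvable_long_path:
  fixes VT :: "'b set"
  assumes prob: "embedding_problem VT ET F1 F2 R \<phi> W"
    and IH: "\<And>VT' ET' F1' F2' R' \<phi>' W'. card (VT' :: 'b set) < card VT \<Longrightarrow>
               embedding_problem VT' ET' F1' F2' R' \<phi>' W' \<Longrightarrow> solvable VT' ET' F1' F2' R' \<phi>' W'"
    and M: "longest_path VT ET P" and n: "6 \<le> length P" and R: "R = {P ! 0, P ! (length P - 1)}"
    and leaves: "\<forall>v\<in>VT. deg_le_1 ET v \<longrightarrow> v \<in> set P"
  shows "solvable VT ET F1 F2 R \<phi> W"
proof -
  have G: "graph VT ET" and A: "acyclic_graph ET" and C: "colour_classes VT ET F1 F2" and "R \<subseteq> F1"
    and budget: "within_budget F1 F2 W" and presc: "admissible_prescription R \<phi> W"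
    using embedding_problemD[OF prob] by simp_all
  have P: "is_path ET P" using M by (simp add: longest_path_def)
  define a b y z where "a = P ! 0" and "b = P ! 1" and "y = P ! 2" and "z = P ! (length P - 1)"
  note ends = a_def b_def y_def z_def
  have l: "0 < length P" "1 < length P" "2 < length P" "length P - 1 < length P" "3 \<le> length P"
    using n by linarith+
  have "distinct P" using P by (simp add: is_path_def)
  then have dist: "a \<noteq> b" "a \<noteq> y" "a \<noteq> z" "b \<noteq> y" "b \<noteq> z" "y \<noteq> z"
    using l n by (auto simp: ends nth_eq_iff_index_eq simp del: length_greater_0_conv)
  have col: "a \<in> F1" "z \<in> F1"
    using \<open>R \<subseteq> F1\<close> by (auto simp: R ends)
  note start = longest_path_start[OF G A C M l(5) leaves col(1)[unfolded ends], folded ends]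
  have "a \<in> VT" "b \<in> VT"
    using col start(2) C by (auto simp: colour_classes_def)
  have \<phi>: "\<phi> a \<in> good_X" "\<phi> z \<in> good_X" "\<phi> a \<noteq> \<phi> z" "\<phi> a \<notin> W" "\<phi> z \<notin> W"
    using presc dist(3) by (auto simp: admissible_prescription_def R ends inj_on_def)
  have "finite F1"
    using budget by (simp add: within_budget_def)
  then have "card {a, z} \<le> card F1"
    using col by (intro card_mono) auto
  then obtain c x where cx: "c \<in> good_Y" "x \<in> good_X" "adj E (\<phi> a) c" "adj E c x" "c \<notin> W"
    "x \<notin> W \<union> {\<phi> a, \<phi> z}"
    using obtain_good_path_start[OF \<phi>(1) budget] dist by auto
  define g where "g v = (if v = a then \<phi> a else c)" for v
  show ?thesis
  proof (rule solvable_by_removal[OF prob IH, of "{a, b}" g "{y, z}" "\<phi>(y := x)"])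
    show "inj_on g {a, b}" "g ` ({a, b} \<inter> F1) \<subseteq> good_X" "g ` ({a, b} \<inter> F2) \<subseteq> good_Y"
      "g ` {a, b} \<inter> W = {}"
      using \<phi> cx start col dist good_X_good_Y_disjoint by (auto simp: g_def)
    show "{y, z} \<subseteq> F1 - {a, b}" "card {y, z} \<le> 2"
      using start col dist by (auto simp: card_insert_if)
    have far: "2 + 2 < length P - 1"
      using n by linarith
    show "\<not> (\<exists>w\<in>VT. \<forall>r\<in>{y, z}. adj ET r w)"
      using acyclic_path_no_common_neighbour[OF G A P far l(4)] by (auto simp: ends)
    show "inj_on (\<phi>(y := x)) {y, z}" "(\<phi>(y := x)) ` {y, z} \<subseteq> good_X"
      "(\<phi>(y := x)) ` {y, z} \<inter> (W \<union> g ` {a, b}) = {}"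
      using \<phi> cx dist good_X_good_Y_disjoint by (auto simp: g_def)
    show "g r = \<phi> r" if "r \<in> R" "r \<in> {a, b}" for r
      using that dist by (auto simp: g_def R ends)
    show "r \<in> {y, z} \<and> (\<phi>(y := x)) r = \<phi> r" if "r \<in> R" "r \<notin> {a, b}" for r
      using that dist by (auto simp: R ends)
    show "adj E (g u) (g v)" if "adj ET u v" "u \<in> {a, b}" "v \<in> {a, b}" for u v
      using that start cx dist by (auto simp: g_def adj_commute)
    show "v \<in> {y, z} \<and> adj E (g u) ((\<phi>(y := x)) v)" if "adj ET u v" "u \<in> {a, b}" "v \<notin> {a, b}" for u v
      using that start cx dist by (auto simp: g_def)
  qed (use \<open>a \<in> VT\<close> \<open>b \<in> VT\<close> in auto)
qed

lemma solvable_path_5: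
  fixes VT :: "'b set"
  assumes prob: "embedding_problem VT ET F1 F2 R \<phi> W"
    and IH: "\<And>VT' ET' F1' F2' R' \<phi>' W'. card (VT' :: 'b set) < card VT \<Longrightarrow>
               embedding_problem VT' ET' F1' F2' R' \<phi>' W' \<Longrightarrow> solvable VT' ET' F1' F2' R' \<phi>' W'"
    and M: "longest_path VT ET P" and n: "length P = 5" and R: "R = {P ! 0, P ! 4}"
    and leaves: "\<forall>v\<in>VT. deg_le_1 ET v \<longrightarrow> v \<in> set P"
  shows "solvable VT ET F1 F2 R \<phi> W"
proof -
  have G: "graph VT ET" and A: "acyclic_graph ET" and C: "colour_classes VT ET F1 F2" and "R \<subseteq> F1"
    and budget: "within_budget F1 F2 W" and presc: "admissible_prescription R \<phi> W"
    using embedding_problemD[OF prob] by simp_all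
  have P: "is_path ET P" using M by (simp add: longest_path_def)
  define a b y d z where "a = P ! 0" and "b = P ! 1" and "y = P ! 2" and "d = P ! 3" and "z = P ! 4"
  note ends = a_def b_def y_def d_def z_def
  have "distinct P" using P by (simp add: is_path_def)
  then have dist: "a \<noteq> b" "a \<noteq> y" "a \<noteq> d" "a \<noteq> z" "b \<noteq> y" "b \<noteq> d" "b \<noteq> z"
    "y \<noteq> d" "y \<noteq> z" "d \<noteq> z"
    using n by (auto simp: ends nth_eq_iff_index_eq)
  have col: "a \<in> F1" "z \<in> F1"
    using \<open>R \<subseteq> F1\<close> by (auto simp: R ends)
  have rev_ends: "rev P ! 0 = z" "rev P ! 1 = d" "rev P ! 2 = y"
    using n by (simp_all add: ends rev_nth)
  have len: "3 \<le> length P" "3 \<le> length (rev P)"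
    and leaves_rev: "\<forall>v\<in>VT. deg_le_1 ET v \<longrightarrow> v \<in> set (rev P)"
    using n leaves by simp_all
  note start = longest_path_start[OF G A C M len(1) leaves col(1)[unfolded ends], folded ends]
  note finish = longest_path_start[OF G A C longest_path_rev[OF M] len(2) leaves_rev,
      unfolded rev_ends, OF col(2)]
  have "a \<in> VT" "b \<in> VT" "d \<in> VT" "z \<in> VT"
    using col start(2) finish(2) C by (auto simp: colour_classes_def)
  have \<phi>: "\<phi> a \<in> good_X" "\<phi> z \<in> good_X" "\<phi> a \<noteq> \<phi> z" "\<phi> a \<notin> W" "\<phi> z \<notin> W"
    using presc dist(4) by (auto simp: admissible_prescription_def R ends inj_on_def)
  have "finite F1" "finite F2"
    using budget by (simp_all add: within_budget_def)
  then have "card {a, y, z} \<le> card F1" "card {b, d} \<le> card F2"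
    using col start finish by (intro card_mono; auto)+
  then obtain c1 x c3 where
    path: "c1 \<in> good_Y" "x \<in> good_X" "c3 \<in> good_Y" "adj E (\<phi> a) c1" "adj E c1 x" "adj E x c3"
      "adj E (\<phi> z) c3" "c1 \<notin> W" "c3 \<notin> W" "c1 \<noteq> c3" "x \<notin> W \<union> {\<phi> a, \<phi> z}"
    using obtain_good_path_between[OF \<phi>(1,2) budget] dist by auto
  have path_rev: "adj E c1 (\<phi> a)" "adj E c3 x" "adj E c3 (\<phi> z)"
    using path by (simp_all add: adj_commute)
  define g where "g v = (if v = a then \<phi> a else if v = b then c1 else if v = d then c3 else \<phi> z)" for v
  show ?thesis
  proof (rule solvable_by_removal[OF prob IH, of "{a, b, d, z}" g "{y}" "\<lambda>_. x"])
    show "inj_on g {a, b, d, z}" "g ` ({a, b, d, z} \<inter> F1) \<subseteq> good_X"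
      "g ` ({a, b, d, z} \<inter> F2) \<subseteq> good_Y" "g ` {a, b, d, z} \<inter> W = {}"
      using \<phi> path start finish col dist good_X_good_Y_disjoint by (auto simp: g_def inj_on_def)
    show "{y} \<subseteq> F1 - {a, b, d, z}"
      using start dist by auto
    show "(\<lambda>_. x) ` {y} \<inter> (W \<union> g ` {a, b, d, z}) = {}"
      using path good_X_good_Y_disjoint by (auto simp: g_def)
    show "g r = \<phi> r" if "r \<in> R" for r
      using that dist by (auto simp: g_def R ends)
    show "adj E (g u) (g v)" if "adj ET u v" "u \<in> {a, b, d, z}" "v \<in> {a, b, d, z}" for u v
      using that start finish path path_rev dist by (auto simp: g_def)
    show "v \<in> {y} \<and> adj E (g u) x" if "adj ET u v" "u \<in> {a, b, d, z}" "v \<notin> {a, b, d, z}" for u v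
      using that start finish path path_rev dist by (auto simp: g_def)
  qed (use \<open>a \<in> VT\<close> \<open>b \<in> VT\<close> \<open>d \<in> VT\<close> \<open>z \<in> VT\<close> path in \<open>auto simp: R ends\<close>)
qed

end

context dense_regular_pair
begin

lemma solvable_remove_leaf:
  fixes VT :: "'b set"
  assumes prob: "embedding_problem VT ET F1 F2 R \<phi> W"
    and IH: "\<And>VT' ET' F1' F2' R' \<phi>' W'. card (VT' :: 'b set) < card VT \<Longrightarrow>
               embedding_problem VT' ET' F1' F2' R' \<phi>' W' \<Longrightarrow> solvable VT' ET' F1' F2' R' \<phi>' W'"
    and v: "v \<in> VT" "v \<notin> R" "deg_le_1 ET v"
  shows "solvable VT ET F1 F2 R \<phi> W"
proof -
  have forest: "admissible_forest VT ET F1 F2 R" and budget: "within_budget F1 F2 W"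
    and presc: "admissible_prescription R \<phi> W"
    using prob by (simp_all add: embedding_problem_def)
  have G: "graph VT ET" and C: "colour_classes VT ET F1 F2"
    using forest by (simp_all add: admissible_forest_def)
  have fin: "finite VT" "finite F1" "finite F2"
    using G C by (auto simp: graph_def colour_classes_def intro: finite_subset)
  have "embedding_problem (VT - {v}) (remove_vertices ET {v}) (F1 - {v}) (F2 - {v}) R \<phi> W"
    unfolding embedding_problem_def
  proof (intro conjI)
    show "admissible_forest (VT - {v}) (remove_vertices ET {v}) (F1 - {v}) (F2 - {v}) R"
      using forest v(2) by (intro admissible_forest_remove_vertices[OF forest]) (auto simp: admissible_forest_def)
    show "within_budget (F1 - {v}) (F2 - {v}) W"
      by (rule within_budget_mono[OF budget]) auto
  qed (rule presc)
  moreover have "card (VT - {v}) < card VT"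
    using fin(1) v(1) by (rule card_Diff1_less)
  ultimately obtain \<psi> where emb: "embeds (VT - {v}) (remove_vertices ET {v}) (F1 - {v}) (F2 - {v}) W \<psi>"
    and agree: "\<forall>r\<in>R. \<psi> r = \<phi> r"
    using IH unfolding solvable_def by blast
  obtain p where "embeds VT ET F1 F2 W (\<psi>(v := p))"
    using embeds_extend_deg_le_1[OF emb G C v(1,3) budget] by blast
  moreover have "\<forall>r\<in>R. (\<psi>(v := p)) r = \<phi> r"
    using agree v(2) by auto
  ultimately show ?thesis
    unfolding solvable_def by blast
qed

lemma solvable_leaves_prescribed:
  fixes VT :: "'b set"
  assumes prob: "embedding_problem VT ET F1 F2 R \<phi> W"
    and IH: "\<And>VT' ET' F1' F2' R' \<phi>' W'. card (VT' :: 'b set) < card VT \<Longrightarrow>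
               embedding_problem VT' ET' F1' F2' R' \<phi>' W' \<Longrightarrow> solvable VT' ET' F1' F2' R' \<phi>' W'"
    and leaves: "\<forall>v\<in>VT. deg_le_1 ET v \<longrightarrow> v \<in> R"
  shows "solvable VT ET F1 F2 R \<phi> W"
proof -
  have forest: "admissible_forest VT ET F1 F2 R" and presc: "admissible_prescription R \<phi> W"
    using prob by (simp_all add: embedding_problem_def)
  show ?thesis
  proof (cases "ET = {}")
    case True
    then have "VT \<subseteq> R"
      using leaves by (auto simp: deg_le_1_def adj_def)
    moreover have "R \<subseteq> F1" "F1 \<union> F2 = VT" "F1 \<inter> F2 = {}"
      using forest by (auto simp: admissible_forest_def colour_classes_def)
    ultimately have "F1 = R" "F2 = {}" "VT = R"
      by auto
    then have "embeds VT ET F1 F2 W \<phi>"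
      using presc True by (simp add: embeds_def admissible_prescription_def adj_def)
    then show ?thesis
      unfolding solvable_def by blast
  next
    case False
    then obtain P where M: "longest_path VT ET P" and n: "2 \<le> length P"
      using longest_path_exists forest by (metis admissible_forest_def)
    note path = longest_path_between_prescribed[OF forest leaves M n]
    from path(2) show ?thesis
    proof
      assume "length P = 5"
      then show ?thesis
        using solvable_path_5[OF prob IH M _ _ path(3)] path(1) by simp
    next
      assume "6 \<le> length P"
      then show ?thesis
        using solvable_long_path[OF prob IH M _ path(1,3)] by simp
    qed
  qed
qed

lemma embedding_problem_solvable:
  "embedding_problem VT ET F1 F2 R \<phi> W \<Longrightarrow> solvable VT ET F1 F2 R \<phi> W"
proof (induction "card VT" arbitrary: VT ET F1 F2 R \<phi> W rule: less_induct)
  case less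
  show ?case
  proof (cases "\<exists>v\<in>VT. v \<notin> R \<and> deg_le_1 ET v")
    case True
    then show ?thesis
      using solvable_remove_leaf[OF less.prems less.hyps] by blast
  next
    case False
    then show ?thesis
      using solvable_leaves_prescribed[OF less.prems less.hyps] by blast
  qed
qed

end

theorem lemma2p4:
  fixes VT :: "'b set" and ET :: "'b set set" and F1 F2 R :: "'b set"
    and V :: "'a set" and E :: "'a set set" and X Y X' Y' :: "'a set"
    and \<epsilon> \<alpha> :: real and \<phi> :: "'b \<Rightarrow> 'a"
  assumes T: "tree VT ET"
    and F: "colour_classes VT ET F1 F2"
    and R: "R \<subseteq> F1" "card R \<le> 2"
    and R2: "card R = 2 \<Longrightarrow> \<not> (\<exists>w\<in>VT. \<forall>r\<in>R. adj ET r w)"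
    and eps: "\<epsilon> > 0" and alpha: "\<alpha> > 2 * \<epsilon>"
    and G: "graph V E"
    and XY: "X \<subseteq> V" "Y \<subseteq> V" "X \<inter> Y = {}"
    and reg: "eps_regular E \<epsilon> X Y"
    and dens: "density E X Y > 3 * \<alpha>"
    and F1X: "real (card F1) \<le> \<epsilon> * real (card X)"
    and F2Y: "real (card F2) \<le> \<epsilon> * real (card Y)"
    and X': "X' \<subseteq> X" "real (card X') > 2 * (\<epsilon> / \<alpha>) * real (card X)"
    and Y': "Y' \<subseteq> Y" "real (card Y') > 2 * (\<epsilon> / \<alpha>) * real (card Y)"
    and phi_inj: "inj_on \<phi> R"
    and phi_into: "\<phi> ` R \<subseteq> {x\<in>X'. real (card (neighbours_in E x Y')) > 3 * \<epsilon> * real (card Y)}"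
  shows "\<exists>\<psi>. inj_on \<psi> VT \<and> \<psi> ` VT \<subseteq> X \<union> Y \<and> (\<forall>r\<in>R. \<psi> r = \<phi> r)
           \<and> (\<forall>u v. {u, v} \<in> ET \<longrightarrow> {\<psi> u, \<psi> v} \<in> E)
           \<and> \<psi> ` F1 \<subseteq> X' \<and> \<psi> ` F2 \<subseteq> Y'"
proof -
  interpret dense_regular_pair V E X Y X' Y' \<epsilon> \<alpha>
    using G XY reg dens eps alpha X' Y' by unfold_locales
  have "finite VT" "VT = F1 \<union> F2"
    using T F by (simp_all add: tree_def graph_def colour_classes_def)
  then have "embedding_problem VT ET F1 F2 R \<phi> {}"
    using T F R R2 F1X F2Y phi_inj phi_into
    by (simp add: embedding_problem_def admissible_forest_def tree_def within_budget_def
        admissible_prescription_def good_X_def)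
  then obtain \<psi> where emb: "embeds VT ET F1 F2 {} \<psi>" and agree: "\<forall>r\<in>R. \<psi> r = \<phi> r"
    using embedding_problem_solvable unfolding solvable_def by blast
  have "\<psi> ` F1 \<subseteq> X'" "\<psi> ` F2 \<subseteq> Y'"
    using emb good_X_sub swap.good_X_sub by (auto simp: embeds_def)
  then have "\<psi> ` VT \<subseteq> X \<union> Y"
    using \<open>VT = F1 \<union> F2\<close> X'(1) Y'(1) by auto
  then show ?thesis
    using emb agree \<open>\<psi> ` F1 \<subseteq> X'\<close> \<open>\<psi> ` F2 \<subseteq> Y'\<close> by (auto simp: embeds_def adj_def)
qed

end
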